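(* Let $\mathcal{C}$ be an exact-repair regenerating code with parameters $\{(n=d+1,k,d),(\alpha,\beta),B\}$, where $\alpha=(d-p+1)\beta-\theta$ with $p\in\{1,\dots,k\}$, $\theta\in[0,\beta)$ ($\theta=0$ if $p=k$), and let $\epsilon=\hat B-B$. Let $L\subset[k]$ with $|L|=\ell$ and let $m\in[d+1]\setminus L$. Then $$H(S_m^L)\le \beta+(\ell-1)\theta+\ell\epsilon\qquad\text{whenever } 2\le\ell\le p<k,$$ and $$H(S_m^L)\le 2\beta-\theta+\ell\epsilon\qquad\text{whenever } 2\le\ell\le p+1<k.$$
   Context: Setting: fix integers $1\le k\le d$, let $n=d+1$, a finite field $\mathbb{F}_q$, and reals $\alpha,\beta>0$. An exact-repair regenerating code with parameters $\{(n,k,d),(\alpha,\beta),B\}$: a file $M$ uniformly distributed over $\mathbb{F}_q^B$ (entropies are measured in units of $\log q$); node $i\in[n]$ stores $W_i$, a deterministic function of $M$, with $H(W_i)\le\alpha$; (data collection) for every $K\subseteq[n]$ with $|K|=k$, $M$ is a function of $(W_a)_{a\in K}$; (exact repair) since $n=d+1$, the helper set of node $y$ is $[n]\setminus\{y\}$: each $x\ne y$ sends helper data $S_x^y$, a deterministic function of $W_x$ with $H(S_x^y)\le\beta$, and $W_y$ is a function of $(S_x^y)_{x\neq y}$. Notation: $[i]=\{1,\dots,i\}$, $[i\ j]=\{i,i+1,\dots,j\}$; for $A\subseteq[n]$, $W_A=(W_a)_{a\in A}$; for $X,Y\subseteq[n]$, $S_X^Y=\{S_x^y: x\in X, y\in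 Y, x\ne y\}$; $S_x^Y=S_{\{x\}}^Y$. The functional-repair optimal file size is $\hat B=\sum_{i=1}^k\min\{\alpha,(d-i+1)\beta\}=p\alpha+\sum_{i=p+1}^k(d-i+1)\beta$, and $\epsilon:=\hat B-B$. *)

theory Defs
  imports "HOL-Library.FuncSet" "HOL-Library.Cardinality" Complex_Main
begin

definition file_space :: "nat \<Rightarrow> (nat \<Rightarrow> 'f::{finite,field}) set" where
  "file_space B = PiE {..<B} (\<lambda>_. UNIV)"

definition ent :: "real \<Rightarrow> 'a set \<Rightarrow> ('a \<Rightarrow> 'b) \<Rightarrow> real" where
  "ent b \<Omega> X = (\<Sum>y\<in>X ` \<Omega>.
     let pr = real (card {\<omega>\<in>\<Omega>. X \<omega> = y}) / real (card \<Omega>) in - pr * log b pr)"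

text \<open>Entropy in units of log q of a deterministic function of the file.\<close>
definition H :: "nat \<Rightarrow> ((nat \<Rightarrow> 'f::{finite,field}) \<Rightarrow> 'b) \<Rightarrow> real" where
  "H B (X :: (nat \<Rightarrow> 'f) \<Rightarrow> 'b) = ent (real CARD('f)) (file_space B) X"

text \<open>Exact-repair regenerating code with n = d+1 nodes 1..n. W i = content of node i,
  S x y = helper data sent by node x to repair node y.\<close>
definition exact_repair_code ::
  "nat \<Rightarrow> nat \<Rightarrow> nat \<Rightarrow> real \<Rightarrow> real \<Rightarrow> nat \<Rightarrow>
   (nat \<Rightarrow> (nat \<Rightarrow> 'f::{finite,field}) \<Rightarrow> 'w) \<Rightarrow> (nat \<Rightarrow> nat \<Rightarrow> (nat \<Rightarrow> 'f) \<Rightarrow> 's) \<Rightarrow> bool" where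
  "exact_repair_code n k d \<alpha> \<beta> B W S \<longleftrightarrow>
     1 \<le> k \<and> k \<le> d \<and> n = d + 1 \<and> \<alpha> > 0 \<and> \<beta> > 0 \<and>
     (\<forall>i\<in>{1..n}. H B (W i) \<le> \<alpha>) \<and>
     (\<forall>K. K \<subseteq> {1..n} \<and> card K = k \<longrightarrow>
        (\<forall>\<omega>\<in>file_space B. \<forall>\<omega>'\<in>file_space B. (\<forall>a\<in>K. W a \<omega> = W a \<omega>') \<longrightarrow> \<omega> = \<omega>')) \<and>
     (\<forall>y\<in>{1..n}. \<forall>x\<in>{1..n}. x \<noteq> y \<longrightarrow>
        (\<exists>g. \<forall>\<omega>\<in>file_space B. S x y \<omega> = g (W x \<omega>)) \<and> H B (S x y) \<le> \<beta>) \<and>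
     (\<forall>y\<in>{1..n}. \<forall>\<omega>\<in>file_space B. \<forall>\<omega>'\<in>file_space B.
        (\<forall>x\<in>{1..n} - {y}. S x y \<omega> = S x y \<omega>') \<longrightarrow> W y \<omega> = W y \<omega>')"

text \<open>Functional-repair optimal file size.\<close>
definition Bhat :: "nat \<Rightarrow> nat \<Rightarrow> real \<Rightarrow> real \<Rightarrow> real" where
  "Bhat k d \<alpha> \<beta> = (\<Sum>i=1..k. min \<alpha> ((real d - real i + 1) * \<beta>))"

end

theory Submission
  imports Defs
begin

text \<open>Fix j with \<open>l \<le> j < k\<close> and a j-set Z of nodes with \<open>L \<subseteq> Z\<close> and \<open>m \<notin> Z\<close>.
  Submodularity bounds \<open>H(S_m^L)\<close> by \<open>H(W_m)\<close> plus the entropy of \<open>S_m^L\<close> given \<open>W_Z\<close>,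
  minus the increment \<open>H(W_(Z+m)) - H(W_Z)\<close>. Given \<open>W_Z\<close>, each \<open>S_m^y\<close> costs at most
  \<open>(d+1-j)\<beta>\<close> minus the increment \<open>H(W_Z) - H(W_(Z-y))\<close>, because \<open>W_y\<close> and \<open>S_m^y\<close> are
  recovered from \<open>W_(Z-y)\<close> and the \<open>d+1-j\<close> helpers outside Z. Completing \<open>Z+m\<close> to k nodes
  recovers the file, while the i-th increment along any chain of stored sets is at most the
  i-th summand \<open>min \<alpha> ((d-i+1)\<beta>)\<close> of \<open>Bhat\<close>; hence the two increments above add up to at
  least the j-th and (j+1)-th summands minus \<open>\<epsilon>\<close>. Taking j = p and j = p+1 gives the two bounds.\<close>

definition fiber_card :: "'a set \<Rightarrow> ('a \<Rightarrow> 'b) \<Rightarrow> 'a \<Rightarrow> nat" where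
  "fiber_card \<Omega> X \<omega> = card {\<omega>'\<in>\<Omega>. X \<omega>' = X \<omega>}"

lemma sum_over_fibers:
  assumes "finite \<Omega>"
  shows "(\<Sum>\<omega>\<in>\<Omega>. g (X \<omega>) / real (fiber_card \<Omega> X \<omega>)) = (\<Sum>y\<in>X`\<Omega>. g y)"
proof -
  have "(\<Sum>\<omega>\<in>\<Omega>. g (X \<omega>) / real (fiber_card \<Omega> X \<omega>))
      = (\<Sum>y\<in>X`\<Omega>. \<Sum>\<omega>\<in>{x\<in>\<Omega>. X x = y}. g (X \<omega>) / real (fiber_card \<Omega> X \<omega>))"
    by (rule sum.image_gen[OF assms])
  also have "\<dots> = (\<Sum>y\<in>X`\<Omega>. g y)"
  proof (rule sum.cong[OF refl])
    fix y assume "y \<in> X`\<Omega>"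
    then have ne: "card {x\<in>\<Omega>. X x = y} > 0" using assms by (auto simp: card_gt_0_iff)
    have "(\<Sum>\<omega>\<in>{x\<in>\<Omega>. X x = y}. g (X \<omega>) / real (fiber_card \<Omega> X \<omega>))
        = (\<Sum>\<omega>\<in>{x\<in>\<Omega>. X x = y}. g y / real (card {x\<in>\<Omega>. X x = y}))"
      by (rule sum.cong) (auto simp: fiber_card_def)
    also have "\<dots> = g y" using ne by simp
    finally show "(\<Sum>\<omega>\<in>{x\<in>\<Omega>. X x = y}. g (X \<omega>) / real (fiber_card \<Omega> X \<omega>)) = g y" .
  qed
  finally show ?thesis .
qed

lemma fiber_card_pos: "finite \<Omega> \<Longrightarrow> \<omega> \<in> \<Omega> \<Longrightarrow> fiber_card \<Omega> X \<omega> > 0"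
  unfolding fiber_card_def by (auto simp: card_gt_0_iff)

lemma ent_eq_average:
  assumes fin: "finite \<Omega>"
  shows "ent b \<Omega> X
    = (\<Sum>\<omega>\<in>\<Omega>. - log b (real (fiber_card \<Omega> X \<omega>) / real (card \<Omega>))) / real (card \<Omega>)"
proof -
  define g where
    "g y = (let pr = real (card {\<omega>\<in>\<Omega>. X \<omega> = y}) / real (card \<Omega>) in - pr * log b pr)" for y
  have "ent b \<Omega> X = (\<Sum>y\<in>X`\<Omega>. g y)" unfolding ent_def g_def ..
  also have "\<dots> = (\<Sum>\<omega>\<in>\<Omega>. g (X \<omega>) / real (fiber_card \<Omega> X \<omega>))"
    by (rule sum_over_fibers[OF fin, symmetric])
  also have "\<dots> = (\<Sum>\<omega>\<in>\<Omega>. - log b (real (fiber_card \<Omega> X \<omega>) / real (card \<Omega>)) / real (card \<Omega>))"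
  proof (rule sum.cong[OF refl])
    fix \<omega> assume "\<omega> \<in> \<Omega>"
    then have "fiber_card \<Omega> X \<omega> > 0" using fiber_card_pos[OF fin] by blast
    then show "g (X \<omega>) / real (fiber_card \<Omega> X \<omega>)
        = - log b (real (fiber_card \<Omega> X \<omega>) / real (card \<Omega>)) / real (card \<Omega>)"
      unfolding g_def Let_def fiber_card_def[symmetric] by (simp add: field_simps)
  qed
  also have "\<dots> = (\<Sum>\<omega>\<in>\<Omega>. - log b (real (fiber_card \<Omega> X \<omega>) / real (card \<Omega>))) / real (card \<Omega>)"
    by (simp add: sum_divide_distrib)
  finally show ?thesis .
qed

lemma ent_cong:
  assumes fin: "finite \<Omega>"
    and eq: "\<And>\<omega> \<omega>'. \<omega> \<in> \<Omega> \<Longrightarrow> \<omega>' \<in> \<Omega> \<Longrightarrow> X \<omega> = X \<omega>' \<longleftrightarrow> Y \<omega> = Y \<omega>'"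
  shows "ent b \<Omega> X = ent b \<Omega> Y"
proof -
  have "\<And>\<omega>. \<omega> \<in> \<Omega> \<Longrightarrow> fiber_card \<Omega> X \<omega> = fiber_card \<Omega> Y \<omega>"
    unfolding fiber_card_def using eq by (intro arg_cong[where f=card]) blast
  then show ?thesis unfolding ent_eq_average[OF fin] by (simp cong: sum.cong)
qed

lemma ent_mono:
  assumes fin: "finite \<Omega>" and b: "b > 1"
    and dep: "\<And>\<omega> \<omega>'. \<omega> \<in> \<Omega> \<Longrightarrow> \<omega>' \<in> \<Omega> \<Longrightarrow> Y \<omega> = Y \<omega>' \<Longrightarrow> X \<omega> = X \<omega>'"
  shows "ent b \<Omega> X \<le> ent b \<Omega> Y"
proof -
  have "(\<Sum>\<omega>\<in>\<Omega>. - log b (real (fiber_card \<Omega> X \<omega>) / real (card \<Omega>)))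
     \<le> (\<Sum>\<omega>\<in>\<Omega>. - log b (real (fiber_card \<Omega> Y \<omega>) / real (card \<Omega>)))"
  proof (rule sum_mono)
    fix \<omega> assume w: "\<omega> \<in> \<Omega>"
    have "{\<omega>'\<in>\<Omega>. Y \<omega>' = Y \<omega>} \<subseteq> {\<omega>'\<in>\<Omega>. X \<omega>' = X \<omega>}"
      using dep[OF _ w] by blast
    then have le: "fiber_card \<Omega> Y \<omega> \<le> fiber_card \<Omega> X \<omega>"
      unfolding fiber_card_def by (rule card_mono[rotated]) (use fin in auto)
    have pos: "fiber_card \<Omega> Y \<omega> > 0" using fiber_card_pos[OF fin w] .
    have cp: "card \<Omega> > 0" using fin w by (auto simp: card_gt_0_iff)
    have "log b (real (fiber_card \<Omega> Y \<omega>) / real (card \<Omega>))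
        \<le> log b (real (fiber_card \<Omega> X \<omega>) / real (card \<Omega>))"
      using le pos cp b by (subst log_le_cancel_iff) (auto simp: divide_right_mono)
    then show "- log b (real (fiber_card \<Omega> X \<omega>) / real (card \<Omega>))
        \<le> - log b (real (fiber_card \<Omega> Y \<omega>) / real (card \<Omega>))"
      by simp
  qed
  then show ?thesis unfolding ent_eq_average[OF fin] by (simp add: divide_right_mono)
qed

lemma ent_const:
  assumes "finite \<Omega>"
  shows "ent b \<Omega> (\<lambda>\<omega>. c) = 0"
  unfolding ent_eq_average[OF assms] fiber_card_def by simp

text \<open>Counting form of \<open>\<Sum> p(x,z) p(y,z) / p(z) \<le> 1\<close>: regroup the sum over pairs
  \<open>(u,v)\<close> with \<open>Z u = Z v\<close>, whose values \<open>(X u, Y v, Z u)\<close> cover all values of \<open>(X,Y,Z)\<close>.\<close>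
lemma sum_fiber_card_ratio_le:
  assumes fin: "finite \<Omega>"
  shows "(\<Sum>\<omega>\<in>\<Omega>. real (fiber_card \<Omega> (\<lambda>\<omega>. (X \<omega>, Z \<omega>)) \<omega>) * real (fiber_card \<Omega> (\<lambda>\<omega>. (Y \<omega>, Z \<omega>)) \<omega>)
          / (real (fiber_card \<Omega> (\<lambda>\<omega>. (X \<omega>, Y \<omega>, Z \<omega>)) \<omega>) * real (fiber_card \<Omega> Z \<omega>)))
     \<le> real (card \<Omega>)"
proof -
  define g where "g t = (case t of (x,y,z) \<Rightarrow>
     real (card {u\<in>\<Omega>. X u = x \<and> Z u = z}) * real (card {v\<in>\<Omega>. Y v = y \<and> Z v = z})
      / real (card {u\<in>\<Omega>. Z u = z}))" for t
  define V where "V = (\<lambda>\<omega>. (X \<omega>, Y \<omega>, Z \<omega>))"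
  define P where "P = Sigma \<Omega> (\<lambda>u. {v\<in>\<Omega>. Z v = Z u})"
  define f where "f = (\<lambda>(u,v). (X u, Y v, Z u))"
  have finP: "finite P" unfolding P_def using fin by auto
  have "(\<Sum>\<omega>\<in>\<Omega>. real (fiber_card \<Omega> (\<lambda>\<omega>. (X \<omega>, Z \<omega>)) \<omega>) * real (fiber_card \<Omega> (\<lambda>\<omega>. (Y \<omega>, Z \<omega>)) \<omega>)
          / (real (fiber_card \<Omega> (\<lambda>\<omega>. (X \<omega>, Y \<omega>, Z \<omega>)) \<omega>) * real (fiber_card \<Omega> Z \<omega>)))
      = (\<Sum>\<omega>\<in>\<Omega>. g (V \<omega>) / real (fiber_card \<Omega> V \<omega>))"
    by (rule sum.cong) (auto simp: g_def V_def fiber_card_def)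
  also have "\<dots> = (\<Sum>t\<in>V`\<Omega>. g t)" by (rule sum_over_fibers[OF fin])
  also have "\<dots> \<le> (\<Sum>t\<in>f`P. g t)"
  proof (rule sum_mono2)
    show "finite (f`P)" using finP by simp
    have "V \<omega> = f (\<omega>, \<omega>) \<and> (\<omega>, \<omega>) \<in> P" if "\<omega> \<in> \<Omega>" for \<omega>
      using that unfolding P_def f_def V_def by auto
    then show "V ` \<Omega> \<subseteq> f ` P" by blast
    show "\<And>t. t \<in> f ` P - V ` \<Omega> \<Longrightarrow> 0 \<le> g t" unfolding g_def by (auto split: prod.splits)
  qed
  also have "\<dots> = (\<Sum>p\<in>P. g (f p) / real (fiber_card P f p))"
    by (rule sum_over_fibers[OF finP, symmetric])
  also have "\<dots> = (\<Sum>p\<in>P. 1 / real (card {w\<in>\<Omega>. Z w = Z (fst p)}))"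
  proof (rule sum.cong[OF refl])
    fix p assume pP: "p \<in> P"
    obtain u v where p: "p = (u,v)" by (cases p)
    have u: "u \<in> \<Omega>" and v: "v \<in> \<Omega>" and zv: "Z v = Z u" using pP p unfolding P_def by auto
    have eq: "{p'\<in>P. f p' = f p}
        = {u'\<in>\<Omega>. X u' = X u \<and> Z u' = Z u} \<times> {v'\<in>\<Omega>. Y v' = Y v \<and> Z v' = Z u}"
      unfolding P_def f_def p by auto
    have "card {u'\<in>\<Omega>. X u' = X u \<and> Z u' = Z u} > 0" "card {v'\<in>\<Omega>. Y v' = Y v \<and> Z v' = Z u} > 0"
      "card {w\<in>\<Omega>. Z w = Z u} > 0"
      using u v zv fin by (auto simp: card_gt_0_iff)
    moreover have "fiber_card P f p
        = card {u'\<in>\<Omega>. X u' = X u \<and> Z u' = Z u} * card {v'\<in>\<Omega>. Y v' = Y v \<and> Z v' = Z u}"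
      unfolding fiber_card_def eq card_cartesian_product ..
    ultimately show "g (f p) / real (fiber_card P f p) = 1 / real (card {w\<in>\<Omega>. Z w = Z (fst p)})"
      unfolding g_def f_def p by (simp add: field_simps)
  qed
  also have "\<dots> = (\<Sum>u\<in>\<Omega>. \<Sum>v\<in>{v\<in>\<Omega>. Z v = Z u}. 1 / real (card {w\<in>\<Omega>. Z w = Z u}))"
    unfolding P_def using fin by (subst sum.Sigma) (auto simp: split_beta)
  also have "\<dots> = (\<Sum>u\<in>\<Omega>. 1)"
  proof (rule sum.cong[OF refl])
    fix u assume "u \<in> \<Omega>"
    then have "card {w\<in>\<Omega>. Z w = Z u} > 0" using fin by (auto simp: card_gt_0_iff)
    then show "(\<Sum>v\<in>{v\<in>\<Omega>. Z v = Z u}. 1 / real (card {w\<in>\<Omega>. Z w = Z u})) = 1" by simp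
  qed
  finally show ?thesis by simp
qed

text \<open>Termwise \<open>ln r \<ge> 1 - 1/r\<close> reduces the claim to the counting inequality above.\<close>
lemma ent_submodular:
  assumes fin: "finite \<Omega>" and b: "b > 1"
  shows "ent b \<Omega> (\<lambda>\<omega>. (X \<omega>, Y \<omega>, Z \<omega>)) + ent b \<Omega> Z
       \<le> ent b \<Omega> (\<lambda>\<omega>. (X \<omega>, Z \<omega>)) + ent b \<Omega> (\<lambda>\<omega>. (Y \<omega>, Z \<omega>))"
proof (cases "\<Omega> = {}")
  case True then show ?thesis by (simp add: ent_def)
next
  case False
  define N where "N = real (card \<Omega>)"
  have Npos: "N > 0" unfolding N_def using fin False by (auto simp: card_gt_0_iff)
  let ?a = "\<lambda>\<omega>. real (fiber_card \<Omega> (\<lambda>\<omega>. (X \<omega>, Y \<omega>, Z \<omega>)) \<omega>)"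
  let ?z = "\<lambda>\<omega>. real (fiber_card \<Omega> Z \<omega>)"
  let ?c = "\<lambda>\<omega>. real (fiber_card \<Omega> (\<lambda>\<omega>. (X \<omega>, Z \<omega>)) \<omega>)"
  let ?d = "\<lambda>\<omega>. real (fiber_card \<Omega> (\<lambda>\<omega>. (Y \<omega>, Z \<omega>)) \<omega>)"
  have lb: "ln b > 0" using b by simp
  have termwise: "(1 - ?c \<omega> * ?d \<omega> / (?a \<omega> * ?z \<omega>)) / ln b
      \<le> log b (?a \<omega> / N) + log b (?z \<omega> / N) - log b (?c \<omega> / N) - log b (?d \<omega> / N)"
    if w: "\<omega> \<in> \<Omega>" for \<omega>
  proof -
    have pos: "?a \<omega> > 0" "?z \<omega> > 0" "?c \<omega> > 0" "?d \<omega> > 0"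
      using fiber_card_pos[OF fin w] by auto
    define r where "r = ?a \<omega> * ?z \<omega> / (?c \<omega> * ?d \<omega>)"
    have rpos: "r > 0" unfolding r_def using pos by simp
    have "ln (1/r) \<le> 1/r - 1" using rpos by (intro ln_le_minus_one) simp
    then have "(1 - 1 / r) / ln b \<le> ln r / ln b"
      using rpos lb by (simp add: ln_div divide_right_mono)
    also have "ln r / ln b
        = log b (?a \<omega> / N) + log b (?z \<omega> / N) - log b (?c \<omega> / N) - log b (?d \<omega> / N)"
      unfolding r_def using pos Npos
      by (simp add: log_def ln_div ln_mult diff_divide_distrib add_divide_distrib)
    finally show ?thesis unfolding r_def by simp
  qed
  have "0 \<le> (N - (\<Sum>\<omega>\<in>\<Omega>. ?c \<omega> * ?d \<omega> / (?a \<omega> * ?z \<omega>))) / ln b"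
    using sum_fiber_card_ratio_le[OF fin, of X Z Y] lb unfolding N_def by (simp add: mult.commute)
  also have "\<dots> = (\<Sum>\<omega>\<in>\<Omega>. (1 - ?c \<omega> * ?d \<omega> / (?a \<omega> * ?z \<omega>)) / ln b)"
    unfolding N_def by (simp add: sum_divide_distrib[symmetric] sum_subtractf)
  also have "\<dots> \<le> (\<Sum>\<omega>\<in>\<Omega>. log b (?a \<omega> / N) + log b (?z \<omega> / N) - log b (?c \<omega> / N) - log b (?d \<omega> / N))"
    by (rule sum_mono) (rule termwise)
  finally have "0 \<le> (\<Sum>\<omega>\<in>\<Omega>. - log b (?c \<omega> / N)) + (\<Sum>\<omega>\<in>\<Omega>. - log b (?d \<omega> / N))
      - (\<Sum>\<omega>\<in>\<Omega>. - log b (?a \<omega> / N)) - (\<Sum>\<omega>\<in>\<Omega>. - log b (?z \<omega> / N))"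
    by (simp add: sum.distrib sum_subtractf sum_negf)
  then show ?thesis unfolding ent_eq_average[OF fin] N_def[symmetric] using Npos
    by (simp add: divide_right_mono add_divide_distrib[symmetric] diff_divide_distrib[symmetric]
        divide_le_cancel)
qed

lemma restrict_eq_iff: "restrict f A = restrict g A \<longleftrightarrow> (\<forall>x\<in>A. f x = g x)"
  by (auto simp: restrict_def fun_eq_iff split: if_splits)

lemma finite_file_space: "finite (file_space B :: (nat \<Rightarrow> 'f::{finite,field}) set)"
  unfolding file_space_def by (rule finite_PiE) auto

lemma card_field_gt_1: "real CARD('f::{finite,field}) > 1"
proof -
  have "card {0::'f, 1} \<le> CARD('f)" by (rule card_mono) auto
  then show ?thesis by simp
qed

lemma H_cong:
  assumes "\<And>\<omega> \<omega>'. \<omega> \<in> file_space B \<Longrightarrow> \<omega>' \<in> file_space B \<Longrightarrow> X \<omega> = X \<omega>' \<longleftrightarrow> Y \<omega> = Y \<omega>'"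
  shows "H B (X :: (nat \<Rightarrow> 'f::{finite,field}) \<Rightarrow> 'b) = H B (Y :: (nat \<Rightarrow> 'f) \<Rightarrow> 'c)"
  unfolding H_def by (rule ent_cong[OF finite_file_space assms])

lemma H_mono:
  assumes "\<And>\<omega> \<omega>'. \<omega> \<in> file_space B \<Longrightarrow> \<omega>' \<in> file_space B \<Longrightarrow> Y \<omega> = Y \<omega>' \<Longrightarrow> X \<omega> = X \<omega>'"
  shows "H B (X :: (nat \<Rightarrow> 'f::{finite,field}) \<Rightarrow> 'b) \<le> H B (Y :: (nat \<Rightarrow> 'f) \<Rightarrow> 'c)"
  unfolding H_def by (rule ent_mono[OF finite_file_space card_field_gt_1 assms])

lemma H_const: "H B (\<lambda>\<omega>::nat \<Rightarrow> 'f::{finite,field}. c) = 0"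
  unfolding H_def by (rule ent_const[OF finite_file_space])

lemma H_submodular:
  "H B (\<lambda>\<omega>::nat \<Rightarrow> 'f::{finite,field}. (X \<omega>, Y \<omega>, Z \<omega>)) + H B Z
       \<le> H B (\<lambda>\<omega>. (X \<omega>, Z \<omega>)) + H B (\<lambda>\<omega>. (Y \<omega>, Z \<omega>))"
  unfolding H_def by (rule ent_submodular[OF finite_file_space card_field_gt_1])

lemma H_subadditive:
  "H B (\<lambda>\<omega>::nat \<Rightarrow> 'f::{finite,field}. (X \<omega>, Y \<omega>)) \<le> H B X + H B Y"
proof -
  have "H B (\<lambda>\<omega>::nat \<Rightarrow> 'f. (X \<omega>, Y \<omega>, ())) + H B (\<lambda>\<omega>::nat \<Rightarrow> 'f. ())
       \<le> H B (\<lambda>\<omega>. (X \<omega>, ())) + H B (\<lambda>\<omega>. (Y \<omega>, ()))"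
    by (rule H_submodular)
  moreover have "H B (\<lambda>\<omega>::nat \<Rightarrow> 'f. (X \<omega>, Y \<omega>, ())) = H B (\<lambda>\<omega>. (X \<omega>, Y \<omega>))"
    by (rule H_cong) auto
  moreover have "H B (\<lambda>\<omega>::nat \<Rightarrow> 'f. (X \<omega>, ())) = H B X" by (rule H_cong) auto
  moreover have "H B (\<lambda>\<omega>::nat \<Rightarrow> 'f. (Y \<omega>, ())) = H B Y" by (rule H_cong) auto
  ultimately show ?thesis by (simp add: H_const)
qed

lemma H_file: "H B (\<lambda>\<omega>::nat \<Rightarrow> 'f::{finite,field}. \<omega>) = real B"
proof -
  let ?\<Omega> = "file_space B :: (nat \<Rightarrow> 'f) set"
  let ?q = "real CARD('f)"
  have fiber: "fiber_card ?\<Omega> (\<lambda>\<omega>. \<omega>) \<omega> = 1" if "\<omega> \<in> ?\<Omega>" for \<omega>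
    unfolding fiber_card_def using that by (simp add: Collect_conj_eq)
  have N: "card ?\<Omega> = CARD('f) ^ B" unfolding file_space_def by (simp add: card_PiE)
  then have Npos: "card ?\<Omega> > 0" by simp
  have "H B (\<lambda>\<omega>::nat \<Rightarrow> 'f. \<omega>) = (\<Sum>\<omega>\<in>?\<Omega>. - log ?q (1 / real (card ?\<Omega>))) / real (card ?\<Omega>)"
    unfolding H_def ent_eq_average[OF finite_file_space] by (simp add: fiber cong: sum.cong)
  also have "\<dots> = log ?q (real (card ?\<Omega>))"
    using Npos card_field_gt_1[where 'f='f] by (simp add: log_divide)
  also have "\<dots> = real B" unfolding N using card_field_gt_1[where 'f='f] by (simp add: log_nat_power)
  finally show ?thesis .
qed

lemma H_restrict_le_sum_conditional:
  assumes "finite L"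
  shows "H B (\<lambda>\<omega>::nat \<Rightarrow> 'f::{finite,field}. (restrict (\<lambda>y. F y \<omega>) L, Z \<omega>)) - H B Z
     \<le> (\<Sum>y\<in>L. H B (\<lambda>\<omega>. (F y \<omega>, Z \<omega>)) - H B Z)"
  using assms
proof (induction L rule: finite_induct)
  case empty
  have "H B (\<lambda>\<omega>::nat \<Rightarrow> 'f. (restrict (\<lambda>y. F y \<omega>) {}, Z \<omega>)) = H B Z" by (rule H_cong) auto
  then show ?case by (simp only: sum.empty)
next
  case (insert y L)
  have "H B (\<lambda>\<omega>::nat \<Rightarrow> 'f. (restrict (\<lambda>y. F y \<omega>) (insert y L), Z \<omega>))
      = H B (\<lambda>\<omega>. (F y \<omega>, restrict (\<lambda>y. F y \<omega>) L, Z \<omega>))"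
    by (rule H_cong) (auto simp: restrict_eq_iff)
  moreover have "H B (\<lambda>\<omega>::nat \<Rightarrow> 'f. (F y \<omega>, restrict (\<lambda>y. F y \<omega>) L, Z \<omega>)) + H B Z
      \<le> H B (\<lambda>\<omega>. (F y \<omega>, Z \<omega>)) + H B (\<lambda>\<omega>. (restrict (\<lambda>y. F y \<omega>) L, Z \<omega>))"
    by (rule H_submodular)
  moreover have "(\<Sum>y\<in>insert y L. H B (\<lambda>\<omega>::nat \<Rightarrow> 'f. (F y \<omega>, Z \<omega>)) - H B Z)
     = (H B (\<lambda>\<omega>. (F y \<omega>, Z \<omega>)) - H B Z) + (\<Sum>y\<in>L. H B (\<lambda>\<omega>::nat \<Rightarrow> 'f. (F y \<omega>, Z \<omega>)) - H B Z)"
    using insert by (simp add: sum.insert)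
  ultimately show ?case using insert.IH by linarith
qed

lemma H_restrict_le_sum:
  assumes "finite L"
  shows "H B (\<lambda>\<omega>::nat \<Rightarrow> 'f::{finite,field}. restrict (\<lambda>y. F y \<omega>) L) \<le> (\<Sum>y\<in>L. H B (F y))"
proof -
  have "H B (\<lambda>\<omega>::nat \<Rightarrow> 'f. (restrict (\<lambda>y. F y \<omega>) L, ())) - H B (\<lambda>\<omega>::nat \<Rightarrow> 'f. ())
     \<le> (\<Sum>y\<in>L. H B (\<lambda>\<omega>. (F y \<omega>, ())) - H B (\<lambda>\<omega>::nat \<Rightarrow> 'f. ()))"
    by (rule H_restrict_le_sum_conditional[OF assms])
  moreover have "H B (\<lambda>\<omega>::nat \<Rightarrow> 'f. (restrict (\<lambda>y. F y \<omega>) L, ()))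
      = H B (\<lambda>\<omega>. restrict (\<lambda>y. F y \<omega>) L)"
    by (rule H_cong) auto
  moreover have "H B (\<lambda>\<omega>::nat \<Rightarrow> 'f. (F y \<omega>, ())) = H B (F y)" for y by (rule H_cong) auto
  ultimately show ?thesis by (simp add: H_const)
qed

definition stored :: "(nat \<Rightarrow> 'a \<Rightarrow> 'w) \<Rightarrow> nat set \<Rightarrow> 'a \<Rightarrow> (nat \<Rightarrow> 'w)" where
  "stored W A = (\<lambda>\<omega>. restrict (\<lambda>a. W a \<omega>) A)"

text \<open>A node added to \<open>i - 1\<close> stored nodes costs at most its own size \<open>\<alpha>\<close>, or the
  \<open>d - i + 1\<close> helper messages it receives from the nodes not yet stored.\<close>
definition increment_bound :: "real \<Rightarrow> real \<Rightarrow> nat \<Rightarrow> nat \<Rightarrow> real" where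
  "increment_bound \<alpha> \<beta> d i = min \<alpha> ((real d - real i + 1) * \<beta>)"

lemma Bhat_eq_sum_increment_bound: "Bhat k d \<alpha> \<beta> = (\<Sum>i=1..k. increment_bound \<alpha> \<beta> d i)"
  unfolding Bhat_def increment_bound_def ..

lemma sum_atLeastAtMost_split_pair:
  fixes f :: "nat \<Rightarrow> real"
  assumes "1 \<le> j" "j + 1 \<le> k"
  shows "(\<Sum>i=1..k. f i) = (\<Sum>i\<in>{0<..j-1}. f i) + f j + f (j+1) + (\<Sum>i\<in>{j+1<..k}. f i)"
proof -
  have "{1..k} = {0<..j-1} \<union> {j-1<..k}" using assms by auto
  then have "(\<Sum>i=1..k. f i) = (\<Sum>i\<in>{0<..j-1}. f i) + (\<Sum>i\<in>{j-1<..k}. f i)"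
    by (simp add: sum.union_disjoint)
  also have "{j-1<..k} = insert j (insert (j+1) {j+1<..k})" using assms by auto
  finally show ?thesis by simp
qed

lemma obtain_subset_between:
  assumes "finite U" "L \<subseteq> U" "card L \<le> j" "j \<le> card U"
  obtains Z where "L \<subseteq> Z" "Z \<subseteq> U" "card Z = j"
proof -
  have finL: "finite L" using assms finite_subset by blast
  have "j - card L \<le> card (U - L)" using assms by (simp add: card_Diff_subset finL)
  then obtain T where T: "T \<subseteq> U - L" "card T = j - card L"
    by (rule obtain_subset_with_card_n)
  then have "card (L \<union> T) = j"
    using assms finL finite_subset[OF _ assms(1)] by (subst card_Un_disjoint) auto
  then show ?thesis using that T assms(2) by blast
qed

context
  fixes W :: "nat \<Rightarrow> (nat \<Rightarrow> 'f::{finite,field}) \<Rightarrow> 'w"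
    and S :: "nat \<Rightarrow> nat \<Rightarrow> (nat \<Rightarrow> 'f) \<Rightarrow> 's"
    and n k d :: nat and \<alpha> \<beta> :: real and B :: nat
  assumes code: "exact_repair_code n k d \<alpha> \<beta> B W S"
begin

lemma code_params: "1 \<le> k" "k \<le> d" "n = d + 1" "\<beta> > 0"
  using code unfolding exact_repair_code_def by auto

lemma H_node_le: "i \<in> {1..n} \<Longrightarrow> H B (W i) \<le> \<alpha>"
  using code unfolding exact_repair_code_def by auto

lemma H_helper_le: "y \<in> {1..n} \<Longrightarrow> x \<in> {1..n} \<Longrightarrow> x \<noteq> y \<Longrightarrow> H B (S x y) \<le> \<beta>"
  using code unfolding exact_repair_code_def by blast

lemma helper_determined:
  assumes "y \<in> {1..n}" "x \<in> {1..n}" "x \<noteq> y" "\<omega> \<in> file_space B" "\<omega>' \<in> file_space B"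
    and "W x \<omega> = W x \<omega>'"
  shows "S x y \<omega> = S x y \<omega>'"
proof -
  obtain g where "\<forall>\<omega>\<in>file_space B. S x y \<omega> = g (W x \<omega>)"
    using code assms(1-3) unfolding exact_repair_code_def by blast
  then show ?thesis using assms(4-6) by simp
qed

lemma file_determined:
  assumes "K \<subseteq> {1..n}" "card K = k" "\<omega> \<in> file_space B" "\<omega>' \<in> file_space B"
    and "\<forall>a\<in>K. W a \<omega> = W a \<omega>'"
  shows "\<omega> = \<omega>'"
  using code assms unfolding exact_repair_code_def by blast

lemma node_repaired:
  assumes "y \<in> {1..n}" "\<omega> \<in> file_space B" "\<omega>' \<in> file_space B"
    and "\<forall>x\<in>{1..n} - {y}. S x y \<omega> = S x y \<omega>'"
  shows "W y \<omega> = W y \<omega>'"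
  using code assms unfolding exact_repair_code_def by blast

lemma node_determined_by_stored_and_helpers:
  assumes y: "y \<in> {1..n}" and cover: "{1..n} - {y} \<subseteq> A \<union> C"
    and w: "\<omega> \<in> file_space B" "\<omega>' \<in> file_space B"
    and eA: "\<forall>a\<in>A. W a \<omega> = W a \<omega>'" and eC: "\<forall>x\<in>C. S x y \<omega> = S x y \<omega>'"
  shows "W y \<omega> = W y \<omega>'"
proof (rule node_repaired[OF y w], intro ballI)
  fix x assume x: "x \<in> {1..n} - {y}"
  show "S x y \<omega> = S x y \<omega>'"
  proof (cases "x \<in> C")
    case False
    then have "W x \<omega> = W x \<omega>'" using x cover eA by blast
    then show ?thesis using x helper_determined[OF y _ _ w] by blast
  qed (use eC in blast)
qed

lemma file_size_le_H_stored:
  assumes "K \<subseteq> {1..n}" "card K = k"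
  shows "real B \<le> H B (stored W K)"
proof -
  have "H B (\<lambda>\<omega>::nat \<Rightarrow> 'f. \<omega>) \<le> H B (stored W K)"
  proof (rule H_mono)
    fix \<omega> \<omega>' :: "nat \<Rightarrow> 'f" assume w: "\<omega> \<in> file_space B" "\<omega>' \<in> file_space B"
      and "stored W K \<omega> = stored W K \<omega>'"
    then have "\<forall>a\<in>K. W a \<omega> = W a \<omega>'" by (simp add: stored_def restrict_eq_iff)
    then show "\<omega> = \<omega>'" by (rule file_determined[OF assms w])
  qed
  then show ?thesis by (simp add: H_file)
qed

lemma H_stored_empty: "H B (stored W {}) = 0"
proof -
  have "stored W {} = (\<lambda>_. \<lambda>_. undefined)" by (simp add: stored_def fun_eq_iff)
  then show ?thesis by (simp add: H_const)
qed

lemma H_helpers_le: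
  assumes "C \<subseteq> {1..n} - {y}" "y \<in> {1..n}"
  shows "H B (\<lambda>\<omega>. restrict (\<lambda>x. S x y \<omega>) C) \<le> real (card C) * \<beta>"
proof -
  have fin: "finite C" using assms(1) finite_subset by blast
  have "H B (\<lambda>\<omega>. restrict (\<lambda>x. S x y \<omega>) C) \<le> (\<Sum>x\<in>C. H B (S x y))"
    by (rule H_restrict_le_sum[OF fin])
  also have "\<dots> \<le> (\<Sum>x\<in>C. \<beta>)"
    using assms by (intro sum_mono H_helper_le) auto
  finally show ?thesis by simp
qed

lemma H_helpers_stored_le:
  assumes "C \<subseteq> {1..n} - {y}" "y \<in> {1..n}"
  shows "H B (\<lambda>\<omega>. (restrict (\<lambda>x. S x y \<omega>) C, stored W A \<omega>))
    \<le> real (card C) * \<beta> + H B (stored W A)"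
  using H_subadditive[of B "\<lambda>\<omega>. restrict (\<lambda>x. S x y \<omega>) C" "stored W A"] H_helpers_le[OF assms]
  by linarith

lemma H_stored_insert_le:
  assumes A: "A \<subseteq> {1..n}" and y: "y \<in> {1..n}" "y \<notin> A"
  shows "H B (stored W (insert y A)) \<le> H B (stored W A) + increment_bound \<alpha> \<beta> d (card A + 1)"
proof -
  have finA: "finite A" using A finite_subset by blast
  have "H B (stored W (insert y A)) = H B (\<lambda>\<omega>. (W y \<omega>, stored W A \<omega>))"
    by (rule H_cong) (auto simp: stored_def restrict_eq_iff)
  also have "\<dots> \<le> H B (W y) + H B (stored W A)" by (rule H_subadditive)
  finally have by_node: "H B (stored W (insert y A)) \<le> \<alpha> + H B (stored W A)"
    using H_node_le[OF y(1)] by simp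
  define C where "C = {1..n} - insert y A"
  have CS: "C \<subseteq> {1..n} - {y}" unfolding C_def by auto
  have "H B (stored W (insert y A)) \<le> H B (\<lambda>\<omega>. (restrict (\<lambda>x. S x y \<omega>) C, stored W A \<omega>))"
  proof (rule H_mono)
    fix \<omega> \<omega>' assume w: "\<omega> \<in> file_space B" "\<omega>' \<in> file_space B"
      and "(restrict (\<lambda>x. S x y \<omega>) C, stored W A \<omega>) = (restrict (\<lambda>x. S x y \<omega>') C, stored W A \<omega>')"
    then have eC: "\<forall>x\<in>C. S x y \<omega> = S x y \<omega>'" and eA: "\<forall>a\<in>A. W a \<omega> = W a \<omega>'"
      by (auto simp: stored_def restrict_eq_iff)
    have "W y \<omega> = W y \<omega>'"
      by (rule node_determined_by_stored_and_helpers[OF y(1) _ w eA eC]) (auto simp: C_def)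
    then show "stored W (insert y A) \<omega> = stored W (insert y A) \<omega>'"
      using eA by (auto simp: stored_def restrict_eq_iff)
  qed
  also have "\<dots> \<le> real (card C) * \<beta> + H B (stored W A)" by (rule H_helpers_stored_le[OF CS y(1)])
  finally have by_repair: "H B (stored W (insert y A)) \<le> real (card C) * \<beta> + H B (stored W A)" .
  have "card C = n - (card A + 1)" unfolding C_def
    using card_Diff_subset[of "insert y A" "{1..n}"] A y finA by auto
  moreover have "card A + 1 \<le> n"
    using A y finA card_mono[of "{1..n}" "insert y A"] by auto
  ultimately have "real (card C) = real d - real (card A + 1) + 1" using code_params(3) by auto
  then show ?thesis using by_node by_repair unfolding increment_bound_def by (auto simp: min_def)
qed

lemma H_stored_union_le:
  assumes "R \<subseteq> {1..n}" "G \<subseteq> {1..n}" "G \<inter> R = {}"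
  shows "H B (stored W (G \<union> R)) - H B (stored W G)
    \<le> (\<Sum>i\<in>{card G<..card G + card R}. increment_bound \<alpha> \<beta> d i)"
proof -
  have finR: "finite R" and finG: "finite G"
    using assms by (meson finite_atLeastAtMost finite_subset)+
  show ?thesis using finR assms
  proof (induction R rule: finite_induct)
    case empty then show ?case by simp
  next
    case (insert r R)
    have "H B (stored W (insert r (G \<union> R)))
        \<le> H B (stored W (G \<union> R)) + increment_bound \<alpha> \<beta> d (card (G \<union> R) + 1)"
      by (rule H_stored_insert_le) (use insert in auto)
    moreover have "card (G \<union> R) = card G + card R" using insert finG by (simp add: card_Un_disjoint)
    moreover have "{card G<..card G + card (insert r R)}
        = insert (card G + card R + 1) {card G<..card G + card R}"
      using insert by auto
    ultimately show ?case using insert by simp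
  qed
qed

lemma H_helper_given_stored_le:
  assumes Z: "Z \<subseteq> {1..n}" "card Z = j" and m: "m \<in> {1..n}" "m \<notin> Z" and y: "y \<in> Z"
  shows "H B (\<lambda>\<omega>. (S m y \<omega>, stored W Z \<omega>)) - H B (stored W Z)
    \<le> (real d + 1 - real j) * \<beta> - (H B (stored W Z) - H B (stored W (Z - {y})))"
proof -
  have yn: "y \<in> {1..n}" using y Z by auto
  define C where "C = {1..n} - Z"
  have CS: "C \<subseteq> {1..n} - {y}" unfolding C_def using y by auto
  have "H B (\<lambda>\<omega>. (S m y \<omega>, stored W Z \<omega>))
      \<le> H B (\<lambda>\<omega>. (restrict (\<lambda>x. S x y \<omega>) C, stored W (Z - {y}) \<omega>))"
  proof (rule H_mono)
    fix \<omega> \<omega>' assume w: "\<omega> \<in> file_space B" "\<omega>' \<in> file_space B"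
      and "(restrict (\<lambda>x. S x y \<omega>) C, stored W (Z - {y}) \<omega>)
        = (restrict (\<lambda>x. S x y \<omega>') C, stored W (Z - {y}) \<omega>')"
    then have eC: "\<forall>x\<in>C. S x y \<omega> = S x y \<omega>'" and eA: "\<forall>a\<in>Z - {y}. W a \<omega> = W a \<omega>'"
      by (auto simp: stored_def restrict_eq_iff)
    have "W y \<omega> = W y \<omega>'"
      by (rule node_determined_by_stored_and_helpers[OF yn _ w eA eC]) (auto simp: C_def)
    moreover have "m \<in> C" using m unfolding C_def by auto
    ultimately show "(S m y \<omega>, stored W Z \<omega>) = (S m y \<omega>', stored W Z \<omega>')"
      using eA eC by (auto simp: stored_def restrict_eq_iff)
  qed
  also have "\<dots> \<le> real (card C) * \<beta> + H B (stored W (Z - {y}))"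
    by (rule H_helpers_stored_le[OF CS yn])
  also have "real (card C) = real d + 1 - real j"
    using Z code_params(3) card_mono[OF _ Z(1)] unfolding C_def
    by (simp add: card_Diff_subset finite_subset[OF Z(1)] of_nat_diff)
  finally show ?thesis by simp
qed

lemma H_helper_data_le_increments:
  assumes Z: "Z \<subseteq> {1..n}" "card Z = j" and m: "m \<in> {1..n}" "m \<notin> Z" and L: "L \<subseteq> Z"
  shows "H B (\<lambda>\<omega>. restrict (\<lambda>y. S m y \<omega>) L)
    \<le> \<alpha> - (H B (stored W (insert m Z)) - H B (stored W Z))
      + (\<Sum>y\<in>L. (real d + 1 - real j) * \<beta> - (H B (stored W Z) - H B (stored W (Z - {y}))))"
proof -
  have finZ: "finite Z" using Z finite_subset by blast
  have finL: "finite L" using L finZ finite_subset by blast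
  define SL where "SL = (\<lambda>\<omega>. restrict (\<lambda>y. S m y \<omega>) L)"
  have SL_determined: "SL \<omega> = SL \<omega>'"
    if "\<omega> \<in> file_space B" "\<omega>' \<in> file_space B" "W m \<omega> = W m \<omega>'" for \<omega> \<omega>'
  proof -
    have "y \<in> {1..n} \<and> y \<noteq> m" if "y \<in> L" for y using that L Z m by auto
    then show ?thesis unfolding SL_def restrict_eq_iff using helper_determined[OF _ m(1) _ that] by blast
  qed
  have "H B (\<lambda>\<omega>. (W m \<omega>, stored W Z \<omega>, SL \<omega>)) + H B SL
      \<le> H B (\<lambda>\<omega>. (W m \<omega>, SL \<omega>)) + H B (\<lambda>\<omega>. (stored W Z \<omega>, SL \<omega>))"
    by (rule H_submodular)
  moreover have "H B (\<lambda>\<omega>. (W m \<omega>, stored W Z \<omega>, SL \<omega>)) = H B (stored W (insert m Z))"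
  proof (rule H_cong)
    fix \<omega> \<omega>' :: "nat \<Rightarrow> 'f" assume w: "\<omega> \<in> file_space B" "\<omega>' \<in> file_space B"
    have "stored W (insert m Z) \<omega> = stored W (insert m Z) \<omega>'
        \<longleftrightarrow> W m \<omega> = W m \<omega>' \<and> stored W Z \<omega> = stored W Z \<omega>'"
      unfolding stored_def restrict_eq_iff by blast
    then show "(W m \<omega>, stored W Z \<omega>, SL \<omega>) = (W m \<omega>', stored W Z \<omega>', SL \<omega>')
        \<longleftrightarrow> stored W (insert m Z) \<omega> = stored W (insert m Z) \<omega>'"
      using SL_determined[OF w] by auto
  qed
  moreover have "H B (\<lambda>\<omega>. (W m \<omega>, SL \<omega>)) = H B (W m)"
    by (rule H_cong) (use SL_determined in blast)
  moreover have "H B (\<lambda>\<omega>. (stored W Z \<omega>, SL \<omega>)) = H B (\<lambda>\<omega>. (SL \<omega>, stored W Z \<omega>))"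
    by (rule H_cong) auto
  moreover have "H B (\<lambda>\<omega>. (SL \<omega>, stored W Z \<omega>)) - H B (stored W Z)
     \<le> (\<Sum>y\<in>L. H B (\<lambda>\<omega>. (S m y \<omega>, stored W Z \<omega>)) - H B (stored W Z))"
    unfolding SL_def by (rule H_restrict_le_sum_conditional[OF finL])
  moreover have "(\<Sum>y\<in>L. H B (\<lambda>\<omega>. (S m y \<omega>, stored W Z \<omega>)) - H B (stored W Z))
     \<le> (\<Sum>y\<in>L. (real d + 1 - real j) * \<beta> - (H B (stored W Z) - H B (stored W (Z - {y}))))"
    using L H_helper_given_stored_le[OF Z m] by (intro sum_mono) blast
  ultimately show ?thesis using H_node_le[OF m(1)] unfolding SL_def by linarith
qed

text \<open>Both increments are bounded above through the chain \<open>Z - {y} \<subset> Z \<subset> Z \<union> {m} \<subseteq> K\<close>,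
  with K of size k; since \<open>W\<^sub>K\<close> determines the file, they cannot both be small.\<close>
lemma stored_increments_ge:
  assumes Z: "Z \<subseteq> {1..n}" "card Z = j" and m: "m \<in> {1..n}" "m \<notin> Z" and y: "y \<in> Z"
    and j: "1 \<le> j" "j + 1 \<le> k"
  shows "(H B (stored W Z) - H B (stored W (Z - {y})))
      + (H B (stored W (insert m Z)) - H B (stored W Z))
    \<ge> increment_bound \<alpha> \<beta> d j + increment_bound \<alpha> \<beta> d (j+1) - (Bhat k d \<alpha> \<beta> - real B)"
proof -
  have finZ: "finite Z" using Z finite_subset by blast
  have mZ: "insert m Z \<subseteq> {1..n}" "card (insert m Z) = j + 1" using Z m finZ by auto
  obtain K where K: "insert m Z \<subseteq> K" "K \<subseteq> {1..n}" "card K = k"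
    using obtain_subset_between[of "{1..n}" "insert m Z" k] mZ j code_params by auto
  have "K = insert m Z \<union> (K - insert m Z)" using K(1) by blast
  moreover have "card (K - insert m Z) = k - (j + 1)"
    using card_Diff_subset[OF _ K(1)] finZ K(3) mZ(2) by simp
  ultimately have upper: "H B (stored W K) - H B (stored W (insert m Z))
      \<le> (\<Sum>i\<in>{j+1<..k}. increment_bound \<alpha> \<beta> d i)"
    using H_stored_union_le[of "K - insert m Z" "insert m Z"] K mZ j by auto
  have "card (Z - {y}) = j - 1" using Z y finZ by auto
  then have lower: "H B (stored W (Z - {y})) \<le> (\<Sum>i\<in>{0<..j-1}. increment_bound \<alpha> \<beta> d i)"
    using H_stored_union_le[of "Z - {y}" "{}"] Z by (auto simp: H_stored_empty)
  show ?thesis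
    using file_size_le_H_stored[OF K(2,3)] upper lower
      sum_atLeastAtMost_split_pair[OF j, of "increment_bound \<alpha> \<beta> d"]
    unfolding Bhat_eq_sum_increment_bound by linarith
qed

lemma H_helper_data_le:
  assumes L: "L \<subseteq> {1..n}" "card L = l" "1 \<le> l" and m: "m \<in> {1..n}" "m \<notin> L"
    and j: "l \<le> j" "j + 1 \<le> k"
  shows "H B (\<lambda>\<omega>. restrict (\<lambda>y. S m y \<omega>) L)
    \<le> \<alpha> + real l * ((real d + 1 - real j) * \<beta>
          - (increment_bound \<alpha> \<beta> d j + increment_bound \<alpha> \<beta> d (j+1) - (Bhat k d \<alpha> \<beta> - real B)))
      + (real l - 1) * ((real d - real j) * \<beta>)"
proof -
  have "L \<subseteq> {1..n} - {m}" "j \<le> card ({1..n} - {m})" using L m j code_params by auto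
  then obtain Z where Z: "L \<subseteq> Z" "Z \<subseteq> {1..n} - {m}" "card Z = j"
    using obtain_subset_between[of "{1..n} - {m}" L j] L j by auto
  then have Zn: "Z \<subseteq> {1..n}" "m \<notin> Z" by auto
  define Dm where "Dm = H B (stored W (insert m Z)) - H B (stored W Z)"
  define t where "t = increment_bound \<alpha> \<beta> d j + increment_bound \<alpha> \<beta> d (j+1) - (Bhat k d \<alpha> \<beta> - real B)"
  have Dm_le: "Dm \<le> (real d - real j) * \<beta>"
    using H_stored_insert_le[OF Zn(1) m(1) Zn(2)] Z(3) unfolding Dm_def increment_bound_def
    by (auto simp: min_def split: if_splits)
  have "H B (\<lambda>\<omega>. restrict (\<lambda>y. S m y \<omega>) L)
      \<le> \<alpha> - Dm + (\<Sum>y\<in>L. (real d + 1 - real j) * \<beta> - (H B (stored W Z) - H B (stored W (Z - {y}))))"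
    unfolding Dm_def by (rule H_helper_data_le_increments[OF Zn(1) Z(3) m(1) Zn(2) Z(1)])
  also have "\<dots> \<le> \<alpha> - Dm + (\<Sum>y\<in>L. (real d + 1 - real j) * \<beta> - (t - Dm))"
    using stored_increments_ge[OF Zn(1) Z(3) m(1) Zn(2)] Z(1) j L(3)
    unfolding Dm_def t_def by (intro add_left_mono sum_mono) (auto, fastforce)
  also have "\<dots> = \<alpha> + real l * ((real d + 1 - real j) * \<beta> - t) + (real l - 1) * Dm"
    using L(2) by (simp add: algebra_simps)
  also have "\<dots> \<le> \<alpha> + real l * ((real d + 1 - real j) * \<beta> - t) + (real l - 1) * ((real d - real j) * \<beta>)"
    using Dm_le L(3) by (simp add: mult_left_mono)
  finally show ?thesis unfolding t_def .
qed

end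

theorem proposition2:
  fixes W :: "nat \<Rightarrow> (nat \<Rightarrow> 'f::{finite,field}) \<Rightarrow> 'w"
    and S :: "nat \<Rightarrow> nat \<Rightarrow> (nat \<Rightarrow> 'f) \<Rightarrow> 's"
    and \<alpha> \<beta> \<theta> \<epsilon> :: real and n k d p B l m :: nat and L :: "nat set"
  assumes code: "exact_repair_code n k d \<alpha> \<beta> B W S"
    and p: "p \<in> {1..k}"
    and th0: "0 \<le> \<theta>" and th1: "\<theta> < \<beta>" and thk: "p = k \<Longrightarrow> \<theta> = 0"
    and alpha: "\<alpha> = (real d - real p + 1) * \<beta> - \<theta>"
    and eps: "\<epsilon> = Bhat k d \<alpha> \<beta> - real B"
    and L: "L \<subseteq> {1..k}" "card L = l"
    and m: "m \<in> {1..d+1} - L"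
  shows "(2 \<le> l \<and> l \<le> p \<and> p < k \<longrightarrow>
           H B (\<lambda>\<omega>. restrict (\<lambda>y. S m y \<omega>) L) \<le> \<beta> + (real l - 1) * \<theta> + real l * \<epsilon>)
       \<and> (2 \<le> l \<and> l \<le> p + 1 \<and> p + 1 < k \<longrightarrow>
           H B (\<lambda>\<omega>. restrict (\<lambda>y. S m y \<omega>) L) \<le> 2 * \<beta> - \<theta> + real l * \<epsilon>)"
proof -
  \<comment> \<open>Both claims assume \<open>p < k\<close>.\<close>
  note par = code_params[OF code]
  have Ln: "L \<subseteq> {1..n}" and mn: "m \<in> {1..n}" "m \<notin> L" using L m par by auto
  note bound = H_helper_data_le[OF code Ln L(2) _ mn, folded eps]
  have inc_p: "increment_bound \<alpha> \<beta> d p = \<alpha>"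
    and inc_p1: "increment_bound \<alpha> \<beta> d (p + 1) = (real d - real p) * \<beta>"
    and inc_p2: "increment_bound \<alpha> \<beta> d (p + 1 + 1) = (real d - real p - 1) * \<beta>"
    unfolding increment_bound_def alpha using th0 th1 par by (auto simp: min_def algebra_simps)
  show ?thesis
  proof (intro conjI impI)
    assume "2 \<le> l \<and> l \<le> p \<and> p < k"
    then show "H B (\<lambda>\<omega>. restrict (\<lambda>y. S m y \<omega>) L) \<le> \<beta> + (real l - 1) * \<theta> + real l * \<epsilon>"
      using bound[of p, unfolded inc_p inc_p1] unfolding alpha by (simp add: algebra_simps)
  next
    assume "2 \<le> l \<and> l \<le> p + 1 \<and> p + 1 < k"
    then show "H B (\<lambda>\<omega>. restrict (\<lambda>y. S m y \<omega>) L) \<le> 2 * \<beta> - \<theta> + real l * \<epsilon>"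
      using bound[of "p + 1", unfolded inc_p1 inc_p2] unfolding alpha by (simp add: algebra_simps)
  qed
qed

end
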